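(* Let $A=\bigoplus_{j=1}^k M_{n_j}(\mathbb{C})$ and $B=\bigoplus_{j=1}^l M_{m_j}(\mathbb{C})$ be finite dimensional C*-algebras and let $\phi:A\to B$ be an $L_*$-embedding. Then $\operatorname{mult}_\phi(M_{m_j}(\mathbb{C}))=1$ for all $j=1,\dots,l$.
   Context: In a unital C*-algebra $D$: $\rho_{\min}^D(x)=\inf\{\|x-p\|: p \text{ a minimal projection of } D\}$ (a minimal projection is a nonzero $p=p^2=p^*$ such that every projection $q$ with $qp=q$ satisfies $q=0$ or $q=p$); and $\rho_\sim^D(x,y)=\inf\{\max\{\|x-a\|,\|y-b\|\}: a,b\in D,\ u^*au=b \text{ for some unitary } u\in D\}$. $L_*$ is the language of unital C*-algebras with a unary predicate $P_{\min}$ and a binary predicate $P_\sim$, interpreted as $\rho_{\min}$ and $\rho_\sim$. An $L_*$-embedding $\phi:A\to B$ is an injective unital *-homomorphism with $\rho_{\min}^B(\phi(a))=\rho_{\min}^A(a)$ and $\rho_\sim^B(\phi(a),\phi(a'))=\rho_\sim^A(a,a')$ for all $a,a'\in A$. $E_\phi(n_i,m_j)$ is the multiplicity with which $\phi$ embeds the summand $M_{n_i}(\mathbb{C})$ of $A$ into the summand $M_{m_j}(\mathbb{C})$ of $B$, and $\operatorname{mult}_\phi(M_{m_j}(\mathbb{C}))=\sum_{i=1}^k E_\phi(n_i,m_j)$. *)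

theory Defs
  imports Complex_Main "Jordan_Normal_Form.DL_Rank" "Jordan_Normal_Form.Schur_Decomposition"
begin

text \<open>A finite dimensional C*-algebra  M_{n_1}(C) + ... + M_{n_k}(C)  is modelled by the list
  ns = [n_1,...,n_k] of block sizes; its elements are lists of complex matrices
  [x_1,...,x_k] with x_i an n_i x n_i matrix.\<close>

definition fdalg :: "nat list \<Rightarrow> complex mat list set" where
  "fdalg ns = {xs. length xs = length ns \<and> (\<forall>i<length ns. xs ! i \<in> carrier_mat (ns ! i) (ns ! i))}"

definition fd_add :: "complex mat list \<Rightarrow> complex mat list \<Rightarrow> complex mat list" where
  "fd_add xs ys = map2 (+) xs ys"

definition fd_minus :: "complex mat list \<Rightarrow> complex mat list \<Rightarrow> complex mat list" where
  "fd_minus xs ys = map2 (-) xs ys"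

definition fd_mult :: "complex mat list \<Rightarrow> complex mat list \<Rightarrow> complex mat list" where
  "fd_mult xs ys = map2 (*) xs ys"

definition fd_smult :: "complex \<Rightarrow> complex mat list \<Rightarrow> complex mat list" where
  "fd_smult c xs = map (\<lambda>x. c \<cdot>\<^sub>m x) xs"

definition fd_star :: "complex mat list \<Rightarrow> complex mat list" where
  "fd_star xs = map mat_adjoint xs"

definition fd_one :: "nat list \<Rightarrow> complex mat list" where
  "fd_one ns = map (\<lambda>n. 1\<^sub>m n) ns"

definition fd_zero :: "nat list \<Rightarrow> complex mat list" where
  "fd_zero ns = map (\<lambda>n. 0\<^sub>m n n) ns"

definition cvec_norm :: "complex vec \<Rightarrow> real" where
  "cvec_norm v = sqrt (\<Sum>i<dim_vec v. (cmod (v $ i))\<^sup>2)"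

definition op_norm :: "complex mat \<Rightarrow> real" where
  "op_norm M = Sup {cvec_norm (M *\<^sub>v v) | v. v \<in> carrier_vec (dim_col M) \<and> cvec_norm v \<le> 1}"

definition fd_norm :: "complex mat list \<Rightarrow> real" where
  "fd_norm xs = Max (insert 0 (set (map op_norm xs)))"

definition fd_projection :: "nat list \<Rightarrow> complex mat list \<Rightarrow> bool" where
  "fd_projection ns p \<longleftrightarrow> p \<in> fdalg ns \<and> fd_mult p p = p \<and> fd_star p = p"

definition fd_min_projection :: "nat list \<Rightarrow> complex mat list \<Rightarrow> bool" where
  "fd_min_projection ns p \<longleftrightarrow> fd_projection ns p \<and> p \<noteq> fd_zero ns \<and>
     (\<forall>q. fd_projection ns q \<and> fd_mult q p = q \<longrightarrow> q = fd_zero ns \<or> q = p)"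

definition fd_unitary :: "nat list \<Rightarrow> complex mat list \<Rightarrow> bool" where
  "fd_unitary ns u \<longleftrightarrow> u \<in> fdalg ns \<and> fd_mult (fd_star u) u = fd_one ns \<and> fd_mult u (fd_star u) = fd_one ns"

definition rho_min :: "nat list \<Rightarrow> complex mat list \<Rightarrow> real" where
  "rho_min ns x = Inf {fd_norm (fd_minus x p) | p. fd_min_projection ns p}"

definition rho_sim :: "nat list \<Rightarrow> complex mat list \<Rightarrow> complex mat list \<Rightarrow> real" where
  "rho_sim ns x y = Inf {max (fd_norm (fd_minus x a)) (fd_norm (fd_minus y b)) | a b.
      a \<in> fdalg ns \<and> b \<in> fdalg ns \<and>
      (\<exists>u. fd_unitary ns u \<and> fd_mult (fd_mult (fd_star u) a) u = b)}"

definition unital_star_hom :: "nat list \<Rightarrow> nat list \<Rightarrow> (complex mat list \<Rightarrow> complex mat list) \<Rightarrow> bool" where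
  "unital_star_hom ns ms \<phi> \<longleftrightarrow>
     (\<forall>x\<in>fdalg ns. \<phi> x \<in> fdalg ms) \<and>
     (\<forall>x\<in>fdalg ns. \<forall>y\<in>fdalg ns. \<phi> (fd_add x y) = fd_add (\<phi> x) (\<phi> y)) \<and>
     (\<forall>c. \<forall>x\<in>fdalg ns. \<phi> (fd_smult c x) = fd_smult c (\<phi> x)) \<and>
     (\<forall>x\<in>fdalg ns. \<forall>y\<in>fdalg ns. \<phi> (fd_mult x y) = fd_mult (\<phi> x) (\<phi> y)) \<and>
     (\<forall>x\<in>fdalg ns. \<phi> (fd_star x) = fd_star (\<phi> x)) \<and>
     \<phi> (fd_one ns) = fd_one ms"

definition L_embedding :: "nat list \<Rightarrow> nat list \<Rightarrow> (complex mat list \<Rightarrow> complex mat list) \<Rightarrow> bool" where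
  "L_embedding ns ms \<phi> \<longleftrightarrow> unital_star_hom ns ms \<phi> \<and> inj_on \<phi> (fdalg ns) \<and>
     (\<forall>a\<in>fdalg ns. rho_min ms (\<phi> a) = rho_min ns a) \<and>
     (\<forall>a\<in>fdalg ns. \<forall>a'\<in>fdalg ns. rho_sim ms (\<phi> a) (\<phi> a') = rho_sim ns a a')"

text \<open>Multiplicity E_phi(n_i, m_j): the rank of the j-th block of the image of a rank-one
  projection (the matrix unit e_11) of the i-th summand.\<close>

definition unit11 :: "nat list \<Rightarrow> nat \<Rightarrow> complex mat list" where
  "unit11 ns i = map (\<lambda>t. if t = i then mat (ns ! t) (ns ! t) (\<lambda>(r, c). if r = 0 \<and> c = 0 then 1 else 0)
                          else 0\<^sub>m (ns ! t) (ns ! t)) [0..<length ns]"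

definition cmat_rank :: "complex mat \<Rightarrow> nat" where
  "cmat_rank M = vec_space.rank (dim_row M) M"

definition E_mult :: "nat list \<Rightarrow> nat list \<Rightarrow> (complex mat list \<Rightarrow> complex mat list) \<Rightarrow> nat \<Rightarrow> nat \<Rightarrow> nat" where
  "E_mult ns ms \<phi> i j = cmat_rank (\<phi> (unit11 ns i) ! j)"

definition mult_at :: "nat list \<Rightarrow> nat list \<Rightarrow> (complex mat list \<Rightarrow> complex mat list) \<Rightarrow> nat \<Rightarrow> nat" where
  "mult_at ns ms \<phi> j = (\<Sum>i<length ns. E_mult ns ms \<phi> i j)"

end

theory Submission
  imports Defs "HOL-Analysis.L2_Norm"
begin

(* Let e_i be the matrix unit e_11 of the i-th summand of A.  It is a minimal projection, so
   rho_min (phi e_i) = 0: the projection phi e_i lies at distance < 1 from a minimal projection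
   of B, and a projection that close to a rank-one projection has rank one itself.  Hence
   phi e_i is a rank-one projection sitting in a single block J(i) of B, and E_phi(n_i, m_j)
   is 1 if J(i) = j and 0 otherwise.
   J is injective: for i <> i' the projections e_i, e_i' lie in different summands, which no
   unitary conjugation can mix, so rho_sim (e_i, e_i') >= 1/2; but if J(i) = J(i') their
   images would be orthogonal rank-one projections of one matrix block, which are unitarily
   equivalent, so rho_sim of the images would be 0.
   J is surjective: the e_i generate A as a two-sided ideal, so if phi killed every e_i in
   block j it would kill the unit of A in block j, contradicting unitality. *)

section \<open>Inner products and rank-one matrices\<close>

lemma conjugate_complex_eq_cnj [simp]: "conjugate (x::complex) = cnj x"
  by (simp add: conjugate_complex_def)

lemma one_smult_mat [simp]: "1 \<cdot>\<^sub>m A = (A :: 'a :: semiring_1 mat)"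
  by (rule eq_matI) auto

lemma minus_zero_mat [simp]: "A \<in> carrier_mat nr nc \<Longrightarrow> A - 0\<^sub>m nr nc = (A :: 'a :: group_add mat)"
  by (rule eq_matI) auto

lemma mat_eq_if_minus_eq_0:
  assumes "A \<in> carrier_mat nr nc" "B \<in> carrier_mat nr nc" "A - B = 0\<^sub>m nr nc"
  shows "A = (B :: 'a :: group_add mat)"
proof (rule eq_matI)
  fix i j assume "i < dim_row B" "j < dim_col B"
  then show "A $$ (i, j) = B $$ (i, j)"
    using arg_cong[OF assms(3), of "\<lambda>M. M $$ (i, j)"] assms(1,2) by simp
qed (use assms in auto)

lemma mat_adjoint_dim [simp]:
  "dim_row (mat_adjoint A) = dim_col A" "dim_col (mat_adjoint A) = dim_row A"
  unfolding mat_adjoint_def by auto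

lemma index_mat_adjoint [simp]:
  "i < dim_col A \<Longrightarrow> j < dim_row A \<Longrightarrow> mat_adjoint (A::complex mat) $$ (i,j) = cnj (A $$ (j,i))"
  unfolding mat_adjoint_def by (simp add: mat_of_rows_index)

lemma mat_adjoint_carrier [simp]: "A \<in> carrier_mat n m \<Longrightarrow> mat_adjoint A \<in> carrier_mat m n"
  by auto

lemma mat_adjoint_mat_adjoint [simp]: "mat_adjoint (mat_adjoint A) = (A :: complex mat)"
  by (rule eq_matI) auto

lemma mat_adjoint_one [simp]: "mat_adjoint (1\<^sub>m n :: complex mat) = 1\<^sub>m n"
  by (rule eq_matI) auto

lemma mat_adjoint_minus:
  fixes A B :: "complex mat"
  assumes "A \<in> carrier_mat n m" "B \<in> carrier_mat n m"
  shows "mat_adjoint (A - B) = mat_adjoint A - mat_adjoint B"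
  using assms by (intro eq_matI) auto

lemma cscalar_prod_mult_mat_vec:
  fixes A :: "complex mat"
  assumes "A \<in> carrier_mat n m" "x \<in> carrier_vec m" "y \<in> carrier_vec n"
  shows "(A *\<^sub>v x) \<bullet>c y = x \<bullet>c (mat_adjoint A *\<^sub>v y)"
  using assms
  by (simp add: scalar_prod_def sum_distrib_left sum_distrib_right mult_ac) (rule sum.swap)

lemma cscalar_prod_swap:
  fixes v w :: "complex vec"
  assumes "dim_vec v = dim_vec w"
  shows "w \<bullet>c v = cnj (v \<bullet>c w)"
  using assms by (simp add: scalar_prod_def mult.commute)

lemma cscalar_prod_minus_right:
  fixes x y z :: "complex vec"
  assumes "x \<in> carrier_vec n" "y \<in> carrier_vec n" "z \<in> carrier_vec n"
  shows "x \<bullet>c (y - z) = x \<bullet>c y - x \<bullet>c z"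
  using assms by (simp add: scalar_prod_def sum_subtractf algebra_simps)

lemma unit_vec_cscalar_prod_self: "i < n \<Longrightarrow> unit_vec n i \<bullet>c (unit_vec n i :: complex vec) = 1"
  by (simp add: scalar_prod_def unit_vec_def if_distrib sum.delta' cong: if_cong)

lemma unit_cvec_nonzero_entry:
  fixes v :: "complex vec"
  assumes "v \<bullet>c v = 1"
  obtains r where "r < dim_vec v" "v $ r \<noteq> 0"
proof -
  have "v \<noteq> 0\<^sub>v (dim_vec v)"
    using assms conjugate_square_eq_0_vec[of v "dim_vec v"] by auto
  then show ?thesis
    using that by (metis eq_vecI index_zero_vec)
qed

definition outer_prod :: "complex vec \<Rightarrow> complex vec \<Rightarrow> complex mat" where
  "outer_prod v w = mat (dim_vec v) (dim_vec w) (\<lambda>(r,c). v$r * cnj (w$c))"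

lemma outer_prod_dim [simp]:
  "dim_row (outer_prod v w) = dim_vec v" "dim_col (outer_prod v w) = dim_vec w"
  unfolding outer_prod_def by auto

lemma index_outer_prod [simp]:
  "r < dim_vec v \<Longrightarrow> c < dim_vec w \<Longrightarrow> outer_prod v w $$ (r,c) = v$r * cnj (w$c)"
  unfolding outer_prod_def by auto

lemma outer_prod_carrier [simp]:
  "v \<in> carrier_vec n \<Longrightarrow> w \<in> carrier_vec m \<Longrightarrow> outer_prod v w \<in> carrier_mat n m"
  unfolding outer_prod_def by auto

lemma mat_adjoint_outer_prod: "mat_adjoint (outer_prod v w) = outer_prod w v"
  by (rule eq_matI) auto

lemma outer_prod_smult_left: "outer_prod (c \<cdot>\<^sub>v v) w = c \<cdot>\<^sub>m outer_prod v w"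
  by (rule eq_matI) auto

lemma outer_prod_mult_vec:
  "x \<in> carrier_vec (dim_vec w) \<Longrightarrow> outer_prod v w *\<^sub>v x = (x \<bullet>c w) \<cdot>\<^sub>v v"
  by (rule eq_vecI) (auto simp: scalar_prod_def sum_distrib_left mult_ac)

lemma outer_prod_mult_outer_prod:
  "x \<in> carrier_vec (dim_vec w) \<Longrightarrow> outer_prod v w * outer_prod x y = (x \<bullet>c w) \<cdot>\<^sub>m outer_prod v y"
  by (rule eq_matI) (auto simp: scalar_prod_def sum_distrib_left sum_distrib_right mult_ac)

lemma mult_outer_prod:
  "A \<in> carrier_mat n (dim_vec v) \<Longrightarrow> A * outer_prod v w = outer_prod (A *\<^sub>v v) w"
  by (rule eq_matI) (auto simp: scalar_prod_def sum_distrib_left sum_distrib_right mult_ac)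

lemma outer_prod_mult:
  "A \<in> carrier_mat (dim_vec w) n \<Longrightarrow> outer_prod v w * A = outer_prod v (mat_adjoint A *\<^sub>v w)"
  by (rule eq_matI) (auto simp: scalar_prod_def sum_distrib_left sum_distrib_right mult_ac)

lemma outer_prod_idem: "v \<bullet>c v = 1 \<Longrightarrow> outer_prod v v * outer_prod v v = outer_prod v v"
  by (simp add: outer_prod_mult_outer_prod)

lemma outer_prod_self_nonzero:
  fixes v :: "complex vec"
  assumes "v \<bullet>c v = 1"
  shows "outer_prod v v \<noteq> 0\<^sub>m (dim_vec v) (dim_vec v)"
proof
  assume zero: "outer_prod v v = 0\<^sub>m (dim_vec v) (dim_vec v)"
  obtain r where r: "r < dim_vec v" "v $ r \<noteq> 0"
    using unit_cvec_nonzero_entry[OF assms] .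
  have "outer_prod v v $$ (r,r) \<noteq> 0"
    using r by simp
  then show False
    using zero r by simp
qed

lemma cmat_rank_outer_prod:
  fixes v :: "complex vec"
  assumes v: "v \<in> carrier_vec n" "v \<bullet>c v = 1"
  shows "cmat_rank (outer_prod v v) = 1"
proof -
  interpret vec_space "TYPE(complex)" n .
  have P: "outer_prod v v \<in> carrier_mat n n"
    using v by simp
  have le: "rank (outer_prod v v) \<le> 1"
    by (rule rank_le_1_product_entries[OF P, of "\<lambda>r. v$r" "\<lambda>c. cnj (v$c)"]) simp
  obtain c where c: "c < n" "v $ c \<noteq> 0"
    using unit_cvec_nonzero_entry[OF v(2)] v(1) by auto
  have "col (outer_prod v v) c \<noteq> 0\<^sub>v n"
    using c v(1) by (auto dest!: arg_cong[of _ _ "\<lambda>x. x $ c"])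
  moreover have "lin_indpt {}"
    by (metis empty_subsetI fin_dim finite_basis_exists subset_li_is_li vec_vs vectorspace.basis_def)
  ultimately have "lin_indpt {col (outer_prod v v) c}"
    using lin_dep_iff_in_span[of "{}" "col (outer_prod v v) c"] span_empty c P by simp
  then have "1 \<le> rank (outer_prod v v)"
    using rank_ge_card_indpt[OF P, of "{col (outer_prod v v) c}"] c P by (auto simp: cols_def)
  then show ?thesis
    unfolding cmat_rank_def using le v by simp
qed

lemma cmat_rank_zero: "cmat_rank (0\<^sub>m n n) = 0"
  unfolding cmat_rank_def using vec_space.rank_0I by simp

section \<open>Euclidean and operator norms\<close>

lemma cvec_norm_L2: "cvec_norm v = L2_set (\<lambda>i. cmod (v$i)) {..<dim_vec v}"
  unfolding cvec_norm_def L2_set_def by simp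

lemma cvec_norm_nonneg [simp]: "0 \<le> cvec_norm v"
  unfolding cvec_norm_def by (simp add: sum_nonneg)

lemma cvec_norm_triangle:
  assumes "dim_vec w = dim_vec v"
  shows "cvec_norm (v + w) \<le> cvec_norm v + cvec_norm w"
proof -
  have "cvec_norm (v + w) = L2_set (\<lambda>i. cmod (v$i + w$i)) {..<dim_vec v}"
    unfolding cvec_norm_L2 using assms by (intro L2_set_cong) auto
  also have "\<dots> \<le> L2_set (\<lambda>i. cmod (v$i) + cmod (w$i)) {..<dim_vec v}"
    by (rule L2_set_mono) (auto intro: norm_triangle_ineq)
  also have "\<dots> \<le> cvec_norm v + cvec_norm w"
    unfolding cvec_norm_L2 using assms by (simp add: L2_set_triangle_ineq)
  finally show ?thesis .
qed

lemma cvec_norm_uminus [simp]: "cvec_norm (- v) = cvec_norm v"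
  unfolding cvec_norm_def by simp

lemma cscalar_prod_self: "v \<bullet>c v = complex_of_real ((cvec_norm v)\<^sup>2)"
proof -
  have "(cvec_norm v)\<^sup>2 = (\<Sum>i<dim_vec v. (cmod (v$i))\<^sup>2)"
    by (simp add: cvec_norm_def sum_nonneg)
  then show ?thesis
    by (simp add: scalar_prod_def atLeast0LessThan of_real_sum complex_norm_square
        flip: of_real_power)
qed

lemma cvec_norm_eq_1: "v \<bullet>c v = 1 \<Longrightarrow> cvec_norm v = 1"
  using cscalar_prod_self[of v] cvec_norm_nonneg[of v]
  by (metis of_real_eq_1_iff power_one real_sqrt_abs real_sqrt_one abs_of_nonneg)

lemma cvec_norm_eq_0_iff: "cvec_norm v = 0 \<longleftrightarrow> v = 0\<^sub>v (dim_vec v)"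
proof
  assume "cvec_norm v = 0"
  then have "\<forall>i\<in>{..<dim_vec v}. cmod (v$i) = 0"
    unfolding cvec_norm_L2 by (simp add: L2_set_eq_0_iff)
  then show "v = 0\<^sub>v (dim_vec v)"
    by (intro eq_vecI) auto
next
  assume "v = 0\<^sub>v (dim_vec v)"
  then have "\<forall>i<dim_vec v. v$i = 0"
    by (metis index_zero_vec(1))
  then show "cvec_norm v = 0"
    by (simp add: cvec_norm_def)
qed

lemma cvec_eq_smult_unit:
  fixes x :: "complex vec"
  assumes "x \<in> carrier_vec n" "x \<noteq> 0\<^sub>v n"
  obtains c u where "u \<in> carrier_vec n" "u \<bullet>c u = 1" "c \<noteq> 0" "x = c \<cdot>\<^sub>v u"
proof
  define r where "r = cvec_norm x"
  define u where "u = complex_of_real (1 / r) \<cdot>\<^sub>v x"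
  have r: "r \<noteq> 0"
    using assms cvec_norm_eq_0_iff unfolding r_def by auto
  show "u \<in> carrier_vec n"
    using assms by (simp add: u_def)
  have "u \<bullet>c u = complex_of_real ((1 / r)\<^sup>2) * (x \<bullet>c x)"
    using assms by (simp add: u_def power2_eq_square mult_ac conjugate_smult_vec)
  also have "\<dots> = 1"
    using r by (simp add: cscalar_prod_self r_def power_divide)
  finally show "u \<bullet>c u = 1" .
  show "complex_of_real r \<noteq> 0"
    using r by simp
  show "x = complex_of_real r \<cdot>\<^sub>v u"
    using r by (intro eq_vecI) (auto simp: u_def)
qed

lemma cvec_norm_isometry:
  fixes B :: "complex mat"
  assumes "B \<in> carrier_mat n n" "mat_adjoint B * B = 1\<^sub>m n" "w \<in> carrier_vec n"
  shows "cvec_norm (B *\<^sub>v w) = cvec_norm w"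
proof -
  have "(B *\<^sub>v w) \<bullet>c (B *\<^sub>v w) = w \<bullet>c (mat_adjoint B *\<^sub>v (B *\<^sub>v w))"
    using assms by (simp add: cscalar_prod_mult_mat_vec)
  also have "\<dots> = w \<bullet>c ((mat_adjoint B * B) *\<^sub>v w)"
    using assms by (subst assoc_mult_mat_vec[of "mat_adjoint B" n n B n w]) auto
  also have "\<dots> = w \<bullet>c w"
    using assms by simp
  finally have "(cvec_norm (B *\<^sub>v w))\<^sup>2 = (cvec_norm w)\<^sup>2"
    by (simp only: cscalar_prod_self of_real_eq_iff)
  then show ?thesis
    by (simp add: power2_eq_iff_nonneg)
qed

lemma op_norm_bdd_above:
  "bdd_above {cvec_norm (M *\<^sub>v v) | v. v \<in> carrier_vec (dim_col M) \<and> cvec_norm v \<le> 1}"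
proof -
  let ?C = "\<Sum>r<dim_row M. \<Sum>c<dim_col M. cmod (M $$ (r,c))"
  have "cvec_norm (M *\<^sub>v v) \<le> ?C" if v: "v \<in> carrier_vec (dim_col M)" "cvec_norm v \<le> 1" for v
  proof -
    have entry: "cmod (v$c) \<le> 1" if "c < dim_col M" for c
    proof -
      have "cmod (v$c) \<le> cvec_norm v"
        unfolding cvec_norm_L2 by (rule member_le_L2_set) (use that v in auto)
      then show ?thesis
        using v by simp
    qed
    have "cvec_norm (M *\<^sub>v v) \<le> (\<Sum>r<dim_row M. cmod ((M *\<^sub>v v)$r))"
      unfolding cvec_norm_L2 dim_mult_mat_vec by (rule L2_set_le_sum) simp
    also have "\<dots> \<le> ?C"
    proof (rule sum_mono)
      fix r assume r: "r \<in> {..<dim_row M}"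
      have "cmod ((M *\<^sub>v v)$r) = cmod (\<Sum>c<dim_col M. M $$ (r,c) * v$c)"
        using r v by (simp add: scalar_prod_def atLeast0LessThan)
      also have "\<dots> \<le> (\<Sum>c<dim_col M. cmod (M $$ (r,c) * v$c))"
        by (rule norm_sum)
      also have "\<dots> \<le> (\<Sum>c<dim_col M. cmod (M $$ (r,c)))"
        by (rule sum_mono) (auto simp: norm_mult intro: mult_left_le entry)
      finally show "cmod ((M *\<^sub>v v)$r) \<le> (\<Sum>c<dim_col M. cmod (M $$ (r,c)))" .
    qed
    finally show ?thesis .
  qed
  then show ?thesis
    by (auto simp: bdd_above_def)
qed

lemma cvec_norm_mult_vec_le_op_norm:
  "v \<in> carrier_vec (dim_col M) \<Longrightarrow> cvec_norm v \<le> 1 \<Longrightarrow> cvec_norm (M *\<^sub>v v) \<le> op_norm M"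
  unfolding op_norm_def by (rule cSup_upper[OF _ op_norm_bdd_above]) auto

lemma cvec_norm_mult_unit_le_op_norm:
  "v \<in> carrier_vec (dim_col M) \<Longrightarrow> v \<bullet>c v = 1 \<Longrightarrow> cvec_norm (M *\<^sub>v v) \<le> op_norm M"
  by (rule cvec_norm_mult_vec_le_op_norm) (auto dest: cvec_norm_eq_1)

lemma op_norm_ge_1_if_fixes_unit:
  "v \<in> carrier_vec (dim_col M) \<Longrightarrow> v \<bullet>c v = 1 \<Longrightarrow> M *\<^sub>v v = v \<Longrightarrow> 1 \<le> op_norm M"
  using cvec_norm_mult_unit_le_op_norm cvec_norm_eq_1 by metis

lemma op_norm_zero [simp]: "op_norm (0\<^sub>m n m) = 0"
proof -
  have "cvec_norm (0\<^sub>m n m *\<^sub>v v) = 0" if "v \<in> carrier_vec m" for v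
    using that by (subst cvec_norm_eq_0_iff) auto
  moreover have "cvec_norm (0\<^sub>v m) = 0"
    by (simp add: cvec_norm_eq_0_iff)
  ultimately have "{cvec_norm (0\<^sub>m n m *\<^sub>v v) | v. v \<in> carrier_vec m \<and> cvec_norm v \<le> 1} = {0}"
    by (auto intro!: exI[of _ "0\<^sub>v m"])
  then show ?thesis
    unfolding op_norm_def by simp
qed

lemma op_norm_uminus: "op_norm (- M) = op_norm M"
proof -
  have "(- M) *\<^sub>v v = - (M *\<^sub>v v)" if "v \<in> carrier_vec (dim_col M)" for v
    using that by (intro eq_vecI) (auto simp: scalar_prod_def sum_negf)
  then show ?thesis
    unfolding op_norm_def by (metis (no_types, lifting) cvec_norm_uminus index_uminus_mat(3))
qed

section \<open>Projections and unitaries in a matrix algebra\<close>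

lemma mult_mat_vec_smult_fixed:
  fixes A :: "complex mat"
  assumes "A \<in> carrier_mat n n" "u \<in> carrier_vec n" "c \<noteq> 0" "A *\<^sub>v (c \<cdot>\<^sub>v u) = c \<cdot>\<^sub>v u"
  shows "A *\<^sub>v u = u"
proof -
  have "c \<cdot>\<^sub>v (A *\<^sub>v u) = c \<cdot>\<^sub>v u"
    using assms by (simp add: mult_mat_vec)
  then show ?thesis
    using assms(3) by (metis smult_smult_assoc one_smult_vec field_class.field_inverse)
qed

lemma projection_fixes_unit_vec:
  fixes P :: "complex mat"
  assumes P: "P \<in> carrier_mat n n" "P * P = P" "P \<noteq> 0\<^sub>m n n"
  obtains v where "v \<in> carrier_vec n" "v \<bullet>c v = 1" "P *\<^sub>v v = v"
proof -
  obtain r c where rc: "r < n" "c < n" "P $$ (r,c) \<noteq> 0"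
    using P(1,3) by (metis eq_matI carrier_matD index_zero_mat)
  define x where "x = P *\<^sub>v unit_vec n c"
  have x: "x \<in> carrier_vec n" "x \<noteq> 0\<^sub>v n"
    using P(1) rc by (auto simp: x_def dest!: arg_cong[of _ _ "\<lambda>x. x $ r"])
  have Px: "P *\<^sub>v x = x"
    unfolding x_def using P by (metis assoc_mult_mat_vec unit_vec_carrier)
  obtain a u where u: "u \<in> carrier_vec n" "u \<bullet>c u = 1" "a \<noteq> 0" "x = a \<cdot>\<^sub>v u"
    using cvec_eq_smult_unit[OF x] .
  show ?thesis
    using that u mult_mat_vec_smult_fixed[OF P(1) u(1,3)] Px by simp
qed

lemma projection_below_rank_one:
  fixes Q :: "complex mat"
  assumes Q: "Q \<in> carrier_mat n n" "Q * Q = Q" "mat_adjoint Q = Q"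
    and v: "v \<in> carrier_vec n" "v \<bullet>c v = 1"
    and below: "Q * outer_prod v v = Q"
  shows "Q = 0\<^sub>m n n \<or> Q = outer_prod v v"
proof -
  define w where "w = Q *\<^sub>v v"
  have w: "w \<in> carrier_vec n"
    using Q v by (simp add: w_def)
  have Q_wv: "Q = outer_prod w v"
    using below mult_outer_prod[of Q n v v] Q v by (simp add: w_def)
  then have Q_vw: "Q = outer_prod v w"
    using Q(3) mat_adjoint_outer_prod by metis
  define d where "d = v \<bullet>c w"
  have "Q *\<^sub>v v = d \<cdot>\<^sub>v v"
    unfolding d_def using Q_vw outer_prod_mult_vec[of v w v] v w by (metis carrier_vecD)
  then have "w = d \<cdot>\<^sub>v v"
    by (simp add: w_def)
  then have Q_d: "Q = d \<cdot>\<^sub>m outer_prod v v"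
    using Q_wv by (simp add: outer_prod_smult_left)
  have P: "outer_prod v v \<in> carrier_mat n n"
    using v by simp
  have "Q * Q = (d * d) \<cdot>\<^sub>m outer_prod v v"
    unfolding Q_d using outer_prod_idem[OF v(2)]
    by (simp add: mult_smult_assoc_mat[OF P smult_carrier_mat[OF P]] mult_smult_distrib[OF P P])
      (intro eq_matI, auto)
  with Q(2) have dd: "(d * d) \<cdot>\<^sub>m outer_prod v v = d \<cdot>\<^sub>m outer_prod v v"
    using Q_d by simp
  obtain r where r: "r < n" "v $ r \<noteq> 0"
    using unit_cvec_nonzero_entry[OF v(2)] v(1) by auto
  have "d * d * (v $ r * cnj (v $ r)) = d * (v $ r * cnj (v $ r))"
    using arg_cong[OF dd, of "\<lambda>M. M $$ (r, r)"] r v(1) by simp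
  then have "d * d = d"
    using r by simp
  then have "d = 0 \<or> d = 1"
    by (metis mult_cancel_right1 mult_eq_0_iff)
  then show ?thesis
    using Q_d v by (auto intro!: eq_matI)
qed

lemma projection_minus_rank_one:
  fixes Q :: "complex mat"
  assumes Q: "Q \<in> carrier_mat n n" "Q * Q = Q" "mat_adjoint Q = Q"
    and u: "u \<in> carrier_vec n" "u \<bullet>c u = 1" "Q *\<^sub>v u = u"
  defines "S \<equiv> Q - outer_prod u u"
  shows "S * S = S" "mat_adjoint S = S" "S *\<^sub>v u = 0\<^sub>v n"
proof -
  define U where "U = outer_prod u u"
  have U: "U \<in> carrier_mat n n"
    using u by (simp add: U_def)
  have QU: "Q * U = U"
    unfolding U_def using mult_outer_prod[of Q n u u] Q u by simp
  have UQ: "U * Q = U"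
    unfolding U_def using outer_prod_mult[of Q u n u] Q u by simp
  have UU: "U * U = U"
    unfolding U_def using outer_prod_idem[OF u(2)] .
  have S_U: "S = Q - U"
    by (simp add: S_def U_def)
  have S: "S \<in> carrier_mat n n"
    unfolding S_U using U by (rule minus_carrier_mat)
  have "S * S = Q * S - U * S"
    unfolding S_U using minus_mult_distrib_mat[OF Q(1) U S[unfolded S_U]] .
  also have "\<dots> = (Q * Q - Q * U) - (U * Q - U * U)"
    unfolding S_U using mult_minus_distrib_mat[OF Q(1) Q(1) U] mult_minus_distrib_mat[OF U Q(1) U] by simp
  also have "\<dots> = S"
    unfolding S_U QU UQ UU Q(2) using Q U by (intro eq_matI) auto
  finally show "S * S = S" .
  show "mat_adjoint S = S"
    unfolding S_def using mat_adjoint_minus[OF Q(1) U] Q(3) by (simp add: U_def mat_adjoint_outer_prod)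
  show "S *\<^sub>v u = 0\<^sub>v n"
    unfolding S_def using Q u
    by (simp add: minus_mult_distrib_mat_vec outer_prod_mult_vec)
qed

lemma projection_near_rank_one_image:
  fixes Q :: "complex mat"
  assumes Q: "Q \<in> carrier_mat n n" "Q * Q = Q"
    and v: "v \<in> carrier_vec n" "v \<bullet>c v = 1"
    and near: "op_norm (Q - outer_prod v v) < 1"
  obtains c u where "u \<in> carrier_vec n" "u \<bullet>c u = 1" "c \<noteq> 0" "Q *\<^sub>v v = c \<cdot>\<^sub>v u" "Q *\<^sub>v u = u"
proof -
  have "Q *\<^sub>v v \<noteq> 0\<^sub>v n"
  proof
    assume "Q *\<^sub>v v = 0\<^sub>v n"
    then have "(Q - outer_prod v v) *\<^sub>v v = - v"
      using minus_mult_distrib_mat_vec[OF Q(1) outer_prod_carrier[OF v(1) v(1)] v(1)] v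
      by (simp add: outer_prod_mult_vec)
    then have "1 \<le> op_norm (Q - outer_prod v v)"
      using cvec_norm_mult_unit_le_op_norm[of v "Q - outer_prod v v"] v Q by (simp add: cvec_norm_eq_1)
    then show False
      using near by simp
  qed
  then obtain c u where u: "u \<in> carrier_vec n" "u \<bullet>c u = 1" "c \<noteq> 0" and Qv: "Q *\<^sub>v v = c \<cdot>\<^sub>v u"
    using cvec_eq_smult_unit[OF mult_mat_vec_carrier[OF Q(1) v(1)]] by blast
  have "Q *\<^sub>v (c \<cdot>\<^sub>v u) = c \<cdot>\<^sub>v u"
    using Q v by (metis Qv assoc_mult_mat_vec)
  then show ?thesis
    using that u Qv mult_mat_vec_smult_fixed[OF Q(1) u(1,3)] by blast
qed

text \<open>If \<open>Q\<close> had rank at least two, its range would contain a unit vector orthogonal to \<open>Q v\<close>,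
  hence orthogonal to \<open>v\<close>, and such a vector is fixed by \<open>Q - v v\<^sup>*\<close>.\<close>

lemma projection_near_rank_one:
  fixes Q :: "complex mat"
  assumes Q: "Q \<in> carrier_mat n n" "Q * Q = Q" "mat_adjoint Q = Q"
    and v: "v \<in> carrier_vec n" "v \<bullet>c v = 1"
    and near: "op_norm (Q - outer_prod v v) < 1"
  obtains u where "u \<in> carrier_vec n" "u \<bullet>c u = 1" "Q = outer_prod u u"
proof -
  obtain c u where u: "u \<in> carrier_vec n" "u \<bullet>c u = 1" "c \<noteq> 0"
    and Qv: "Q *\<^sub>v v = c \<cdot>\<^sub>v u" and Qu: "Q *\<^sub>v u = u"
    using projection_near_rank_one_image[OF Q(1,2) v near] .
  define S where "S = Q - outer_prod u u"
  note S = projection_minus_rank_one[OF Q u(1,2) Qu, folded S_def]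
  have S_carrier: "S \<in> carrier_mat n n"
    unfolding S_def using outer_prod_carrier[OF u(1) u(1)] by (rule minus_carrier_mat)
  have "S = 0\<^sub>m n n"
  proof (rule ccontr)
    assume "S \<noteq> 0\<^sub>m n n"
    then obtain y where y: "y \<in> carrier_vec n" "y \<bullet>c y = 1" "S *\<^sub>v y = y"
      using projection_fixes_unit_vec[OF S_carrier S(1)] by blast
    have yu: "y \<bullet>c u = 0"
      using cscalar_prod_mult_mat_vec[OF S_carrier y(1) u(1)] y S by simp
    have "(y \<bullet>c u) \<cdot>\<^sub>v u = 0\<^sub>v n"
      using yu u(1) by (intro eq_vecI) auto
    then have Qy: "Q *\<^sub>v y = y"
      using y(3) Q u y(1) by (simp add: S_def minus_mult_distrib_mat_vec outer_prod_mult_vec)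
    have "y \<bullet>c v = y \<bullet>c (c \<cdot>\<^sub>v u)"
      using cscalar_prod_mult_mat_vec[OF Q(1) y(1) v(1)] Q(3) Qv Qy by simp
    then have "(y \<bullet>c v) \<cdot>\<^sub>v v = 0\<^sub>v n"
      using u y(1) yu v(1) by (intro eq_vecI) (simp_all add: conjugate_smult_vec)
    then have "(Q - outer_prod v v) *\<^sub>v y = y"
      using minus_mult_distrib_mat_vec[OF Q(1) outer_prod_carrier[OF v(1) v(1)] y(1)] y(1) v Qy
      by (simp add: outer_prod_mult_vec)
    then show False
      using op_norm_ge_1_if_fixes_unit[of y "Q - outer_prod v v"] y(1,2) carrier_vecD[OF v(1)] near
      by simp
  qed
  then show ?thesis
    using that u mat_eq_if_minus_eq_0[OF Q(1) outer_prod_carrier[OF u(1) u(1)]] by (simp add: S_def)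
qed

lemma projection_op_norm_less_1:
  fixes P :: "complex mat"
  assumes "P \<in> carrier_mat n n" "P * P = P" "op_norm P < 1"
  shows "P = 0\<^sub>m n n"
  using projection_fixes_unit_vec[OF assms(1,2)] op_norm_ge_1_if_fixes_unit assms
  by (metis carrier_matD(2) not_less)

lemma outer_prod_mult_eq_0_imp_orthogonal:
  fixes v w :: "complex vec"
  assumes "v \<bullet>c v = 1" "w \<bullet>c w = 1" "dim_vec w = dim_vec v"
    and "outer_prod v v * outer_prod w w = 0\<^sub>m (dim_vec v) (dim_vec v)"
  shows "v \<bullet>c w = 0"
proof -
  have "w \<in> carrier_vec (dim_vec v)"
    using assms(3) by (rule carrier_vecI)
  then have zero: "(w \<bullet>c v) \<cdot>\<^sub>m outer_prod v w = 0\<^sub>m (dim_vec v) (dim_vec v)"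
    using outer_prod_mult_outer_prod[of w v v w] assms(4) by simp
  obtain r where r: "r < dim_vec v" "v $ r \<noteq> 0"
    using unit_cvec_nonzero_entry[OF assms(1)] .
  obtain c where c: "c < dim_vec w" "w $ c \<noteq> 0"
    using unit_cvec_nonzero_entry[OF assms(2)] .
  have "(w \<bullet>c v) * (v $ r * cnj (w $ c)) = 0"
    using arg_cong[OF zero, of "\<lambda>M. M $$ (r, c)"] r c assms(3) by simp
  then have "w \<bullet>c v = 0"
    using r c by simp
  then show ?thesis
    using cscalar_prod_swap[of v w] assms(3) by simp
qed

lemma householder_reflection:
  fixes z :: "complex vec"
  assumes z: "z \<in> carrier_vec n" "z \<bullet>c z = 2"
  defines "U \<equiv> 1\<^sub>m n - outer_prod z z"
  shows "U \<in> carrier_mat n n" "mat_adjoint U = U" "U * U = 1\<^sub>m n"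
proof -
  define Z where "Z = outer_prod z z"
  have Z: "Z \<in> carrier_mat n n"
    using z by (simp add: Z_def)
  show U: "U \<in> carrier_mat n n"
    unfolding U_def Z_def[symmetric] using Z by (rule minus_carrier_mat)
  show "mat_adjoint U = U"
    using mat_adjoint_minus[OF one_carrier_mat Z] by (simp add: U_def Z_def mat_adjoint_outer_prod)
  have ZZ: "Z * Z = 2 \<cdot>\<^sub>m Z"
    using outer_prod_mult_outer_prod[of z z z z] z by (simp add: Z_def)
  have "U * U = 1\<^sub>m n * U - Z * U"
    unfolding U_def Z_def[symmetric] using minus_mult_distrib_mat[OF one_carrier_mat Z U[unfolded U_def Z_def[symmetric]]] .
  also have "\<dots> = U - (Z - Z * Z)"
    unfolding U_def Z_def[symmetric] using mult_minus_distrib_mat[OF Z one_carrier_mat Z] Z by simp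
  also have "\<dots> = 1\<^sub>m n"
    unfolding U_def Z_def[symmetric] ZZ using Z by (intro eq_matI) auto
  finally show "U * U = 1\<^sub>m n" .
qed

text \<open>The Householder reflection in \<open>v - w\<close> swaps \<open>v\<close> and \<open>w\<close>.\<close>

lemma orthonormal_vecs_unitarily_equivalent:
  fixes v w :: "complex vec"
  assumes v: "v \<in> carrier_vec n" "v \<bullet>c v = 1" and w: "w \<in> carrier_vec n" "w \<bullet>c w = 1"
    and vw: "v \<bullet>c w = 0"
  obtains U where "U \<in> carrier_mat n n" "mat_adjoint U = U" "U * U = 1\<^sub>m n"
    "U * outer_prod v v * U = outer_prod w w"
proof -
  define z where "z = v - w"
  have z: "z \<in> carrier_vec n"
    using v w by (simp add: z_def)
  have wv: "w \<bullet>c v = 0"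
    using cscalar_prod_swap[of v w] vw v w by simp
  have vz: "v \<bullet>c z = 1" and wz: "w \<bullet>c z = -1"
    using v w vw wv by (simp_all add: z_def cscalar_prod_minus_right)
  have "z \<bullet>c z = v \<bullet>c z - w \<bullet>c z"
    using minus_scalar_prod_distrib[of v n w "conjugate z"] v w z by (simp add: z_def)
  with vz wz have zz: "z \<bullet>c z = 2"
    by simp
  define U where "U = 1\<^sub>m n - outer_prod z z"
  note U = householder_reflection[OF z zz, folded U_def]
  have "U *\<^sub>v v = v - outer_prod z z *\<^sub>v v"
    unfolding U_def using minus_mult_distrib_mat_vec[OF one_carrier_mat _ v(1)] z v(1) by simp
  also have "outer_prod z z *\<^sub>v v = z"
    using outer_prod_mult_vec[of v z z] v(1) z vz by simp
  finally have Uv: "U *\<^sub>v v = w"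
    unfolding z_def using v w by (intro eq_vecI) auto
  have "U * outer_prod v v = outer_prod w v"
    using mult_outer_prod[of U n v v] U v Uv by simp
  moreover have "outer_prod w v * U = outer_prod w w"
    using outer_prod_mult[of U v n w] U v Uv by simp
  ultimately show ?thesis
    using that U by simp
qed

lemma unit_le_op_norm_unitary_conj:
  fixes X W :: "complex mat"
  assumes e: "e \<in> carrier_vec n" "e \<bullet>c e = 1" and X: "X \<in> carrier_mat n n"
    and W: "W \<in> carrier_mat n n" "W * mat_adjoint W = 1\<^sub>m n"
  shows "1 \<le> op_norm (outer_prod e e - X) + op_norm (mat_adjoint W * X * W)"
proof -
  define z where "z = mat_adjoint W *\<^sub>v e"
  have z_carrier: "z \<in> carrier_vec n"
    unfolding z_def using mult_mat_vec_carrier[OF mat_adjoint_carrier[OF W(1)] e(1)] .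
  have "z \<bullet>c z = e \<bullet>c (W *\<^sub>v z)"
    using cscalar_prod_mult_mat_vec[OF mat_adjoint_carrier[OF W(1)] e(1) z_carrier] by (simp add: z_def)
  also have "\<dots> = e \<bullet>c e"
    using W e assoc_mult_mat_vec[of W n n "mat_adjoint W" n e] by (simp add: z_def)
  finally have z: "z \<in> carrier_vec n" "z \<bullet>c z = 1"
    using z_carrier e(2) by simp_all
  have "(outer_prod e e - X) *\<^sub>v e = e - X *\<^sub>v e"
    using minus_mult_distrib_mat_vec[OF outer_prod_carrier[OF e(1) e(1)] X e(1)] e
    by (simp add: outer_prod_mult_vec)
  then have dist: "cvec_norm (e - X *\<^sub>v e) \<le> op_norm (outer_prod e e - X)"
    using cvec_norm_mult_unit_le_op_norm[of e "outer_prod e e - X"] e X by simp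
  have W_adj: "mat_adjoint W \<in> carrier_mat n n"
    using W(1) by simp
  have "(mat_adjoint W * X * W) *\<^sub>v z = (mat_adjoint W * X) *\<^sub>v ((W * mat_adjoint W) *\<^sub>v e)"
    using assoc_mult_mat_vec[OF mult_carrier_mat[OF W_adj X] W(1) z_carrier]
      assoc_mult_mat_vec[OF W(1) W_adj e(1)]
    by (simp add: z_def)
  also have "\<dots> = mat_adjoint W *\<^sub>v (X *\<^sub>v e)"
    using assoc_mult_mat_vec[OF W_adj X e(1)] W(2) e(1) by simp
  finally have "cvec_norm ((mat_adjoint W * X * W) *\<^sub>v z) = cvec_norm (X *\<^sub>v e)"
    using cvec_norm_isometry[of "mat_adjoint W" n "X *\<^sub>v e"] e X W by simp
  then have image: "cvec_norm (X *\<^sub>v e) \<le> op_norm (mat_adjoint W * X * W)"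
    using cvec_norm_mult_unit_le_op_norm[of z "mat_adjoint W * X * W"] z X W by simp
  have "e = (e - X *\<^sub>v e) + X *\<^sub>v e"
    using e X by (intro eq_vecI) auto
  then have "cvec_norm e \<le> cvec_norm (e - X *\<^sub>v e) + cvec_norm (X *\<^sub>v e)"
    using cvec_norm_triangle[of "X *\<^sub>v e" "e - X *\<^sub>v e"] e X by simp
  then show ?thesis
    using dist image cvec_norm_eq_1[OF e(2)] by linarith
qed

section \<open>The direct sum of matrix algebras\<close>

lemma fdalgD:
  "x \<in> fdalg ns \<Longrightarrow> length x = length ns"
  "x \<in> fdalg ns \<Longrightarrow> i < length ns \<Longrightarrow> x ! i \<in> carrier_mat (ns!i) (ns!i)"
  unfolding fdalg_def by auto

lemma fdalgI:
  "length x = length ns \<Longrightarrow> (\<And>i. i < length ns \<Longrightarrow> x ! i \<in> carrier_mat (ns!i) (ns!i)) \<Longrightarrow> x \<in> fdalg ns"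
  unfolding fdalg_def by auto

lemma length_fd_ops [simp]:
  "length (fd_add x y) = min (length x) (length y)"
  "length (fd_minus x y) = min (length x) (length y)"
  "length (fd_mult x y) = min (length x) (length y)"
  "length (fd_smult c x) = length x"
  "length (fd_star x) = length x"
  "length (fd_one ns) = length ns"
  "length (fd_zero ns) = length ns"
  unfolding fd_add_def fd_minus_def fd_mult_def fd_smult_def fd_star_def fd_one_def fd_zero_def
  by auto

lemma nth_fd_ops [simp]:
  "i < length x \<Longrightarrow> i < length y \<Longrightarrow> fd_add x y ! i = x!i + y!i"
  "i < length x \<Longrightarrow> i < length y \<Longrightarrow> fd_minus x y ! i = x!i - y!i"
  "i < length x \<Longrightarrow> i < length y \<Longrightarrow> fd_mult x y ! i = x!i * y!i"
  "i < length x \<Longrightarrow> fd_smult c x ! i = c \<cdot>\<^sub>m (x!i)"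
  "i < length x \<Longrightarrow> fd_star x ! i = mat_adjoint (x!i)"
  "i < length ns \<Longrightarrow> fd_one ns ! i = 1\<^sub>m (ns!i)"
  "i < length ns \<Longrightarrow> fd_zero ns ! i = 0\<^sub>m (ns!i) (ns!i)"
  unfolding fd_add_def fd_minus_def fd_mult_def fd_smult_def fd_star_def fd_one_def fd_zero_def
  by auto

lemma fd_eqI: "length x = length y \<Longrightarrow> (\<And>i. i < length y \<Longrightarrow> x!i = y!i) \<Longrightarrow> x = y"
  by (rule nth_equalityI) auto

lemma fd_one_fdalg: "fd_one ns \<in> fdalg ns"
  by (rule fdalgI) auto

lemma fd_zero_fdalg: "fd_zero ns \<in> fdalg ns"
  by (rule fdalgI) auto

lemma fd_add_fdalg: "x \<in> fdalg ns \<Longrightarrow> y \<in> fdalg ns \<Longrightarrow> fd_add x y \<in> fdalg ns"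
  by (rule fdalgI) (auto simp: fdalgD)

lemma fd_mult_fdalg:
  assumes "x \<in> fdalg ns" "y \<in> fdalg ns"
  shows "fd_mult x y \<in> fdalg ns"
proof (rule fdalgI)
  fix i assume "i < length ns"
  then show "fd_mult x y ! i \<in> carrier_mat (ns!i) (ns!i)"
    using assms mult_carrier_mat[OF fdalgD(2)[OF assms(1)] fdalgD(2)[OF assms(2)]]
    by (simp add: fdalgD)
qed (use assms in \<open>simp add: fdalgD\<close>)

lemma op_norm_le_fd_norm: "i < length xs \<Longrightarrow> op_norm (xs!i) \<le> fd_norm xs"
  unfolding fd_norm_def by (rule Max_ge) auto

lemma fd_norm_nonneg: "0 \<le> fd_norm xs"
  unfolding fd_norm_def by (rule Max_ge) auto

lemma fd_norm_minus_self:
  assumes "x \<in> fdalg ns"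
  shows "fd_norm (fd_minus x x) = 0"
proof -
  have "fd_minus x x ! i = 0\<^sub>m (ns!i) (ns!i)" if "i < length ns" for i
    using that fdalgD[OF assms] by simp
  then have "set (map op_norm (fd_minus x x)) \<subseteq> {0}"
    using fdalgD(1)[OF assms] by (auto simp: in_set_conv_nth)
  then have "insert 0 (set (map op_norm (fd_minus x x))) = {0}"
    by blast
  then show ?thesis
    unfolding fd_norm_def by (metis Max_singleton)
qed

definition fd_block :: "nat list \<Rightarrow> nat \<Rightarrow> complex mat \<Rightarrow> complex mat list" where
  "fd_block ns i M = map (\<lambda>t. if t = i then M else 0\<^sub>m (ns!t) (ns!t)) [0..<length ns]"

lemma length_fd_block [simp]: "length (fd_block ns i M) = length ns"
  unfolding fd_block_def by simp

lemma nth_fd_block [simp]: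
  "t < length ns \<Longrightarrow> fd_block ns i M ! t = (if t = i then M else 0\<^sub>m (ns!t) (ns!t))"
  unfolding fd_block_def by simp

lemma fd_block_fdalg:
  "i < length ns \<Longrightarrow> M \<in> carrier_mat (ns!i) (ns!i) \<Longrightarrow> fd_block ns i M \<in> fdalg ns"
  by (rule fdalgI) auto

lemma fd_block_mult:
  "A \<in> carrier_mat (ns!i) (ns!i) \<Longrightarrow> B \<in> carrier_mat (ns!i) (ns!i) \<Longrightarrow>
   fd_mult (fd_block ns i A) (fd_block ns i B) = fd_block ns i (A * B)"
  by (rule fd_eqI) auto

lemma fd_block_add:
  "A \<in> carrier_mat (ns!i) (ns!i) \<Longrightarrow> B \<in> carrier_mat (ns!i) (ns!i) \<Longrightarrow>
   fd_add (fd_block ns i A) (fd_block ns i B) = fd_block ns i (A + B)"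
  by (rule fd_eqI) auto

lemma fd_block_zero: "fd_block ns i (0\<^sub>m (ns!i) (ns!i)) = fd_zero ns"
  by (rule fd_eqI) auto

lemma fd_eq_fd_block:
  assumes "length x = length ns" "j < length ns"
    and "\<And>k. k < length ns \<Longrightarrow> k \<noteq> j \<Longrightarrow> x!k = 0\<^sub>m (ns!k) (ns!k)"
  shows "x = fd_block ns j (x!j)"
  using assms by (intro fd_eqI) auto

definition fd_rank_one :: "nat list \<Rightarrow> nat \<Rightarrow> complex vec \<Rightarrow> complex mat list" where
  "fd_rank_one ns i v = fd_block ns i (outer_prod v v)"

lemma fd_rank_one_fdalg: "i < length ns \<Longrightarrow> v \<in> carrier_vec (ns!i) \<Longrightarrow> fd_rank_one ns i v \<in> fdalg ns"
  unfolding fd_rank_one_def by (rule fd_block_fdalg) auto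

lemma unit11_eq_fd_block:
  "i < length ns \<Longrightarrow> unit11 ns i = fd_block ns i (outer_prod (unit_vec (ns!i) 0) (unit_vec (ns!i) 0))"
  unfolding unit11_def fd_block_def
  by (rule nth_equalityI) (auto intro!: eq_matI simp: unit_vec_def)

lemma unit11_eq_fd_rank_one: "i < length ns \<Longrightarrow> unit11 ns i = fd_rank_one ns i (unit_vec (ns!i) 0)"
  unfolding fd_rank_one_def by (rule unit11_eq_fd_block)

lemma unit11_fdalg: "unit11 ns i \<in> fdalg ns"
  unfolding unit11_def by (rule fdalgI) auto

lemma unit11_mult_unit11: "i \<noteq> i' \<Longrightarrow> fd_mult (unit11 ns i) (unit11 ns i') = fd_zero ns"
  by (rule fd_eqI) (auto simp: unit11_def)

lemma fd_projection_nth: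
  assumes "fd_projection ns p" "k < length ns"
  shows "p!k \<in> carrier_mat (ns!k) (ns!k)" "p!k * p!k = p!k" "mat_adjoint (p!k) = p!k"
proof -
  have p: "p \<in> fdalg ns" "fd_mult p p = p" "fd_star p = p"
    using assms(1) unfolding fd_projection_def by auto
  show "p!k \<in> carrier_mat (ns!k) (ns!k)"
    using fdalgD(2)[OF p(1) assms(2)] .
  show "p!k * p!k = p!k" "mat_adjoint (p!k) = p!k"
    using arg_cong[OF p(2), of "\<lambda>x. x!k"] arg_cong[OF p(3), of "\<lambda>x. x!k"] assms(2) fdalgD(1)[OF p(1)]
    by auto
qed

context
  fixes ms :: "nat list" and j :: nat and v :: "complex vec"
  assumes j: "j < length ms" and v: "v \<in> carrier_vec (ms!j)" "v \<bullet>c v = 1"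
begin

lemma fd_rank_one_projection: "fd_projection ms (fd_rank_one ms j v)"
  unfolding fd_projection_def
proof (intro conjI)
  show "fd_rank_one ms j v \<in> fdalg ms"
    using fd_rank_one_fdalg[OF j v(1)] .
  show "fd_mult (fd_rank_one ms j v) (fd_rank_one ms j v) = fd_rank_one ms j v"
    by (rule fd_eqI) (auto simp: fd_rank_one_def outer_prod_idem[OF v(2)])
  show "fd_star (fd_rank_one ms j v) = fd_rank_one ms j v"
    by (rule fd_eqI) (auto simp: fd_rank_one_def mat_adjoint_outer_prod)
qed

lemma fd_rank_one_nonzero: "fd_rank_one ms j v \<noteq> fd_zero ms"
proof
  assume zero: "fd_rank_one ms j v = fd_zero ms"
  have "outer_prod v v = fd_rank_one ms j v ! j"
    using j by (simp add: fd_rank_one_def)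
  then have "outer_prod v v = 0\<^sub>m (ms!j) (ms!j)"
    using j by (simp add: zero)
  then show False
    using outer_prod_self_nonzero[OF v(2)] v(1) by simp
qed

lemma fd_rank_one_min_projection: "fd_min_projection ms (fd_rank_one ms j v)"
  unfolding fd_min_projection_def
proof (intro conjI allI impI)
  show "fd_projection ms (fd_rank_one ms j v)" "fd_rank_one ms j v \<noteq> fd_zero ms"
    by (rule fd_rank_one_projection, rule fd_rank_one_nonzero)
  fix q assume "fd_projection ms q \<and> fd_mult q (fd_rank_one ms j v) = q"
  then have q: "fd_projection ms q" and below: "fd_mult q (fd_rank_one ms j v) = q"
    by auto
  have len: "length q = length ms"
    using q fdalgD(1) unfolding fd_projection_def by auto
  have block: "q!k * fd_rank_one ms j v ! k = q!k" if "k < length ms" for k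
    using arg_cong[OF below, of "\<lambda>x. x!k"] that len by (simp add: fd_rank_one_def)
  have other: "q!k = 0\<^sub>m (ms!k) (ms!k)" if "k < length ms" "k \<noteq> j" for k
    using block[OF that(1)] that fd_projection_nth(1)[OF q that(1)] by (simp add: fd_rank_one_def)
  have "q!j = 0\<^sub>m (ms!j) (ms!j) \<or> q!j = outer_prod v v"
    using projection_below_rank_one[OF fd_projection_nth[OF q j] v] block[OF j] j
    by (simp add: fd_rank_one_def)
  moreover have "q = fd_block ms j (q!j)"
    using fd_eq_fd_block[OF len j other] .
  ultimately show "q = fd_zero ms \<or> q = fd_rank_one ms j v"
    by (metis fd_block_zero fd_rank_one_def)
qed

end

lemma fd_min_projection_rank_one:
  assumes p: "fd_min_projection ms p"
  obtains j v where "j < length ms" "v \<in> carrier_vec (ms!j)" "v \<bullet>c v = 1" "p = fd_rank_one ms j v"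
proof -
  have proj: "fd_projection ms p" and nonzero: "p \<noteq> fd_zero ms"
    and minimal: "\<And>q. fd_projection ms q \<Longrightarrow> fd_mult q p = q \<Longrightarrow> q = fd_zero ms \<or> q = p"
    using p unfolding fd_min_projection_def by auto
  have len: "length p = length ms"
    using proj fdalgD(1) unfolding fd_projection_def by auto
  obtain j where j: "j < length ms" "p!j \<noteq> 0\<^sub>m (ms!j) (ms!j)"
    using nonzero len by (metis fd_eqI length_fd_ops(7) nth_fd_ops(7))
  note P = fd_projection_nth[OF proj j(1)]
  obtain v where v: "v \<in> carrier_vec (ms!j)" "v \<bullet>c v = 1" "p!j *\<^sub>v v = v"
    using projection_fixes_unit_vec[OF P(1,2) j(2)] .
  have "fd_mult (fd_rank_one ms j v) p = fd_rank_one ms j v"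
    using j(1) v P fd_projection_nth(1)[OF proj] len
    by (intro fd_eqI) (auto simp: fd_rank_one_def outer_prod_mult[of _ v "ms!j"] left_mult_zero_mat)
  then have "p = fd_rank_one ms j v"
    using minimal fd_rank_one_projection[OF j(1) v(1,2)] fd_rank_one_nonzero[OF j(1) v(1,2)] by metis
  then show ?thesis
    using that j(1) v(1,2) by blast
qed

lemma fd_projection_near_min_projection:
  assumes P: "fd_projection ms P" and p: "fd_min_projection ms p"
    and near: "fd_norm (fd_minus P p) < 1"
  shows "fd_min_projection ms P"
proof -
  obtain j v where j: "j < length ms" and v: "v \<in> carrier_vec (ms!j)" "v \<bullet>c v = 1"
    and p_eq: "p = fd_rank_one ms j v"
    using fd_min_projection_rank_one[OF p] .
  have len: "length P = length ms"
    using P fdalgD(1) unfolding fd_projection_def by auto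
  have block_near: "op_norm (P!k - p!k) < 1" if "k < length ms" for k
    using op_norm_le_fd_norm[of k "fd_minus P p"] near that len
    by (simp add: p_eq fd_rank_one_def)
  have other: "P!k = 0\<^sub>m (ms!k) (ms!k)" if "k < length ms" "k \<noteq> j" for k
    using projection_op_norm_less_1[OF fd_projection_nth(1,2)[OF P that(1)]] block_near[OF that(1)]
      fd_projection_nth(1)[OF P that(1)] that
    by (simp add: p_eq fd_rank_one_def)
  obtain u where u: "u \<in> carrier_vec (ms!j)" "u \<bullet>c u = 1" "P!j = outer_prod u u"
    using projection_near_rank_one[OF fd_projection_nth[OF P j] v] block_near[OF j] j
    by (auto simp: p_eq fd_rank_one_def)
  have "P = fd_rank_one ms j u"
    using fd_eq_fd_block[OF len j other] u(3) by (simp add: fd_rank_one_def)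
  then show ?thesis
    using fd_rank_one_min_projection[OF j u(1,2)] by simp
qed

lemma rho_min_min_projection:
  assumes "fd_min_projection ns p"
  shows "rho_min ns p = 0"
proof -
  have "p \<in> fdalg ns"
    using assms unfolding fd_min_projection_def fd_projection_def by auto
  then show ?thesis
    unfolding rho_min_def using assms
    by (intro cInf_eq_minimum) (auto simp: fd_norm_nonneg fd_norm_minus_self intro!: exI[of _ p])
qed

text \<open>The minimal projection \<open>q\<close> only ensures that the infimum defining \<open>rho_min\<close> is taken
  over a nonempty set.\<close>

lemma fd_projection_rho_min_less_1:
  assumes P: "fd_projection ms P" and small: "rho_min ms P < 1" and q: "fd_min_projection ms q"
  shows "fd_min_projection ms P"
proof -
  define D where "D = {fd_norm (fd_minus P p) | p. fd_min_projection ms p}"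
  have "D \<noteq> {}" "Inf D < 1"
    using q small unfolding D_def rho_min_def by auto
  then obtain d where "d \<in> D" "d < 1"
    using cInf_lessD by blast
  then obtain p where "fd_min_projection ms p" "fd_norm (fd_minus P p) < 1"
    unfolding D_def by blast
  then show ?thesis
    using fd_projection_near_min_projection[OF P] by blast
qed

lemma fd_unitary_nth:
  assumes "fd_unitary ns u" "i < length ns"
  shows "u!i \<in> carrier_mat (ns!i) (ns!i)" "mat_adjoint (u!i) * u!i = 1\<^sub>m (ns!i)"
    "u!i * mat_adjoint (u!i) = 1\<^sub>m (ns!i)"
proof -
  have u: "u \<in> fdalg ns" "fd_mult (fd_star u) u = fd_one ns" "fd_mult u (fd_star u) = fd_one ns"
    using assms(1) unfolding fd_unitary_def by auto
  show "u!i \<in> carrier_mat (ns!i) (ns!i)"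
    using fdalgD(2)[OF u(1) assms(2)] .
  show "mat_adjoint (u!i) * u!i = 1\<^sub>m (ns!i)" "u!i * mat_adjoint (u!i) = 1\<^sub>m (ns!i)"
    using arg_cong[OF u(2), of "\<lambda>x. x!i"] arg_cong[OF u(3), of "\<lambda>x. x!i"] assms(2) fdalgD(1)[OF u(1)]
    by auto
qed

lemma fd_unitary_fd_one: "fd_unitary ns (fd_one ns)"
  unfolding fd_unitary_def by (auto intro!: fd_eqI simp: fd_one_fdalg)

lemma rho_sim_unitarily_equivalent:
  assumes "a \<in> fdalg ns" "b \<in> fdalg ns" "fd_unitary ns u" "fd_mult (fd_mult (fd_star u) a) u = b"
  shows "rho_sim ns a b = 0"
  unfolding rho_sim_def
  by (intro cInf_eq_minimum)
    (use assms in \<open>force simp: fd_norm_minus_self fd_norm_nonneg le_max_iff_disj\<close>)+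

lemma rho_sim_orthonormal_rank_one:
  assumes j: "j < length ms" and v: "v \<in> carrier_vec (ms!j)" "v \<bullet>c v = 1"
    and w: "w \<in> carrier_vec (ms!j)" "w \<bullet>c w = 1" and vw: "v \<bullet>c w = 0"
  shows "rho_sim ms (fd_rank_one ms j v) (fd_rank_one ms j w) = 0"
proof -
  obtain U where U: "U \<in> carrier_mat (ms!j) (ms!j)" "mat_adjoint U = U" "U * U = 1\<^sub>m (ms!j)"
    "U * outer_prod v v * U = outer_prod w w"
    using orthonormal_vecs_unitarily_equivalent[OF v w vw] .
  define u where "u = map (\<lambda>t. if t = j then U else 1\<^sub>m (ms!t)) [0..<length ms]"
  have len: "length u = length ms" and nth: "\<And>t. t < length ms \<Longrightarrow> u!t = (if t = j then U else 1\<^sub>m (ms!t))"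
    by (simp_all add: u_def)
  have "fd_unitary ms u"
    unfolding fd_unitary_def using U by (auto intro!: fdalgI fd_eqI simp: len nth)
  moreover have "fd_mult (fd_mult (fd_star u) (fd_rank_one ms j v)) u = fd_rank_one ms j w"
    using U by (auto intro!: fd_eqI simp: len nth fd_rank_one_def)
  ultimately show ?thesis
    using rho_sim_unitarily_equivalent fd_rank_one_fdalg j v w by blast
qed

lemma rho_sim_greatest:
  assumes "x \<in> fdalg ns"
    and bound: "\<And>a b u. a \<in> fdalg ns \<Longrightarrow> b \<in> fdalg ns \<Longrightarrow> fd_unitary ns u \<Longrightarrow>
      fd_mult (fd_mult (fd_star u) a) u = b \<Longrightarrow> c \<le> max (fd_norm (fd_minus x a)) (fd_norm (fd_minus y b))"
  shows "c \<le> rho_sim ns x y"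
  unfolding rho_sim_def
proof (rule cInf_greatest)
  have "fd_mult (fd_mult (fd_star (fd_one ns)) x) (fd_one ns) = x"
  proof (rule fd_eqI)
    fix k assume "k < length x"
    then have "k < length ns" "x!k \<in> carrier_mat (ns!k) (ns!k)"
      using fdalgD[OF assms(1)] by auto
    then show "fd_mult (fd_mult (fd_star (fd_one ns)) x) (fd_one ns) ! k = x!k"
      using fdalgD(1)[OF assms(1)] by simp
  qed (simp add: fdalgD(1)[OF assms(1)])
  then show "{max (fd_norm (fd_minus x a)) (fd_norm (fd_minus y b)) | a b. a \<in> fdalg ns \<and> b \<in> fdalg ns \<and>
      (\<exists>u. fd_unitary ns u \<and> fd_mult (fd_mult (fd_star u) a) u = b)} \<noteq> {}"
    using assms(1) fd_unitary_fd_one by blast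
qed (use bound in blast)

lemma rho_sim_unit11_distinct:
  assumes i: "i < length ns" "i' < length ns" "i \<noteq> i'" and pos: "0 < ns!i"
  shows "1/2 \<le> rho_sim ns (unit11 ns i) (unit11 ns i')"
proof (rule rho_sim_greatest[OF unit11_fdalg])
  fix a b u
  assume ab: "a \<in> fdalg ns" "b \<in> fdalg ns" and u: "fd_unitary ns u"
    and conj: "fd_mult (fd_mult (fd_star u) a) u = b"
  define e :: "complex vec" where "e = unit_vec (ns!i) 0"
  have e: "e \<in> carrier_vec (ns!i)" "e \<bullet>c e = 1"
    using pos unit_vec_cscalar_prod_self by (simp_all add: e_def)
  note X = fdalgD(2)[OF ab(1) i(1)] and W = fd_unitary_nth[OF u i(1)]
  have "u \<in> fdalg ns"
    using u by (simp add: fd_unitary_def)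
  then have b_i: "b!i = mat_adjoint (u!i) * a!i * u!i"
    using arg_cong[OF conj, of "\<lambda>x. x!i"] i(1) ab by (simp add: fdalgD)
  have minus_b: "0\<^sub>m (ns!i) (ns!i) - b!i = - b!i"
    using fdalgD(2)[OF ab(2) i(1)] by (intro eq_matI) auto
  have "op_norm (outer_prod e e - a!i) \<le> fd_norm (fd_minus (unit11 ns i) a)"
    using op_norm_le_fd_norm[of i "fd_minus (unit11 ns i) a"] i(1) ab
    by (simp add: fdalgD unit11_eq_fd_block e_def)
  moreover have "op_norm (b!i) \<le> fd_norm (fd_minus (unit11 ns i') b)"
    using op_norm_le_fd_norm[of i "fd_minus (unit11 ns i') b"] i ab
    by (simp add: fdalgD unit11_def minus_b op_norm_uminus)
  moreover have "1 \<le> op_norm (outer_prod e e - a!i) + op_norm (b!i)"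
    using unit_le_op_norm_unitary_conj[OF e X W(1,3)] b_i by simp
  ultimately show "1/2 \<le> max (fd_norm (fd_minus (unit11 ns i) a)) (fd_norm (fd_minus (unit11 ns i') b))"
    by linarith
qed

definition fd_ideal :: "nat list \<Rightarrow> complex mat list set \<Rightarrow> bool" where
  "fd_ideal ns K \<longleftrightarrow> K \<subseteq> fdalg ns \<and> fd_zero ns \<in> K \<and> (\<forall>x\<in>K. \<forall>y\<in>K. fd_add x y \<in> K) \<and>
     (\<forall>x\<in>K. \<forall>y\<in>fdalg ns. fd_mult y x \<in> K \<and> fd_mult x y \<in> K)"

text \<open>With \<open>E r s\<close> the matrix units of the \<open>i\<close>-th summand, indexed from 0 (so \<open>unit11 ns i\<close>
  is \<open>E 0 0\<close>), \<open>E r r = E r 0 * E 0 0 * E 0 r\<close> lies in the ideal, and the \<open>E r r\<close> sum to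
  the identity.\<close>

lemma fd_ideal_block_one:
  assumes K: "fd_ideal ns K" and i: "i < length ns" and unit: "unit11 ns i \<in> K"
  shows "fd_block ns i (1\<^sub>m (ns!i)) \<in> K"
proof -
  define n where "n = ns!i"
  define E where "E r s = outer_prod (unit_vec n r) (unit_vec n s)" for r s
  have E: "E r s \<in> carrier_mat (ns!i) (ns!i)" for r s
    by (simp add: E_def n_def)
  have diag: "fd_block ns i (E r r) \<in> K" if "r < n" for r
  proof -
    have "E r 0 * E 0 0 * E 0 r = E r r"
      using that by (simp add: E_def outer_prod_mult_outer_prod unit_vec_cscalar_prod_self)
    moreover have "unit11 ns i = fd_block ns i (E 0 0)"
      by (simp add: unit11_eq_fd_block[OF i] E_def n_def)
    ultimately have "fd_block ns i (E r r) = fd_mult (fd_mult (fd_block ns i (E r 0)) (unit11 ns i)) (fd_block ns i (E 0 r))"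
      by (simp add: fd_block_mult[OF E E] fd_block_mult[OF mult_carrier_mat[OF E E] E])
    then show ?thesis
      using K unit fd_block_fdalg[OF i] E unfolding fd_ideal_def by simp
  qed
  define D :: "nat \<Rightarrow> complex mat" where "D t = mat n n (\<lambda>(a, b). if a = b \<and> a < t then 1 else 0)" for t
  have "fd_block ns i (D t) \<in> K" if "t \<le> n" for t
    using that
  proof (induction t)
    case 0
    have "D 0 = 0\<^sub>m n n"
      by (auto simp: D_def)
    then show ?case
      using K fd_block_zero unfolding fd_ideal_def n_def by metis
  next
    case (Suc t)
    have "D (Suc t) = D t + E t t"
      using Suc.prems by (intro eq_matI) (auto simp: D_def E_def unit_vec_def)
    then have "fd_block ns i (D (Suc t)) = fd_add (fd_block ns i (D t)) (fd_block ns i (E t t))"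
      using E by (simp add: fd_block_add D_def n_def)
    then show ?case
      using K Suc diag unfolding fd_ideal_def by simp
  qed
  moreover have "D n = 1\<^sub>m n"
    by (auto simp: D_def)
  ultimately show ?thesis
    unfolding n_def by (metis order_refl)
qed

lemma fd_ideal_contains_one:
  assumes K: "fd_ideal ns K" and units: "\<And>i. i < length ns \<Longrightarrow> unit11 ns i \<in> K"
  shows "fd_one ns \<in> K"
proof -
  define Pre :: "nat \<Rightarrow> complex mat list" where "Pre t = map (\<lambda>u. if u < t then 1\<^sub>m (ns!u) else 0\<^sub>m (ns!u) (ns!u)) [0..<length ns]" for t
  have "Pre t \<in> K" if "t \<le> length ns" for t
    using that
  proof (induction t)
    case 0
    have "Pre 0 = fd_zero ns"
      by (auto intro: fd_eqI simp: Pre_def)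
    then show ?case
      using K unfolding fd_ideal_def by simp
  next
    case (Suc t)
    have "Pre (Suc t) = fd_add (Pre t) (fd_block ns t (1\<^sub>m (ns!t)))"
      by (rule fd_eqI) (auto simp: Pre_def)
    then show ?case
      using K Suc fd_ideal_block_one[OF K _ units] unfolding fd_ideal_def by simp
  qed
  moreover have "Pre (length ns) = fd_one ns"
    by (rule fd_eqI) (auto simp: Pre_def)
  ultimately show ?thesis
    by (metis order_refl)
qed

section \<open>Unital \<open>*\<close>-homomorphisms and \<open>L\<^sub>*\<close>-embeddings\<close>

context
  fixes ns ms :: "nat list" and \<phi> :: "complex mat list \<Rightarrow> complex mat list"
  assumes hom: "unital_star_hom ns ms \<phi>"
begin

lemma unital_star_homD:
  "x \<in> fdalg ns \<Longrightarrow> \<phi> x \<in> fdalg ms"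
  "x \<in> fdalg ns \<Longrightarrow> y \<in> fdalg ns \<Longrightarrow> \<phi> (fd_add x y) = fd_add (\<phi> x) (\<phi> y)"
  "x \<in> fdalg ns \<Longrightarrow> y \<in> fdalg ns \<Longrightarrow> \<phi> (fd_mult x y) = fd_mult (\<phi> x) (\<phi> y)"
  "x \<in> fdalg ns \<Longrightarrow> \<phi> (fd_smult c x) = fd_smult c (\<phi> x)"
  "x \<in> fdalg ns \<Longrightarrow> \<phi> (fd_star x) = fd_star (\<phi> x)"
  "\<phi> (fd_one ns) = fd_one ms"
  using hom unfolding unital_star_hom_def by auto

lemma unital_star_hom_zero: "\<phi> (fd_zero ns) = fd_zero ms"
proof -
  have "fd_zero ns = fd_smult 0 (fd_one ns)" "fd_zero ms = fd_smult 0 (fd_one ms)"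
    by (auto intro!: fd_eqI eq_matI)
  then show ?thesis
    using unital_star_homD fd_one_fdalg by metis
qed

lemma unital_star_hom_projection: "fd_projection ns x \<Longrightarrow> fd_projection ms (\<phi> x)"
  unfolding fd_projection_def using unital_star_homD by metis

lemma unital_star_hom_block_kernel_ideal:
  assumes j: "j < length ms"
  shows "fd_ideal ns {x \<in> fdalg ns. \<phi> x ! j = 0\<^sub>m (ms!j) (ms!j)}"
proof -
  have len: "length (\<phi> x) = length ms" and block: "\<phi> x ! j \<in> carrier_mat (ms!j) (ms!j)"
    if "x \<in> fdalg ns" for x
    using unital_star_homD(1)[OF that] fdalgD j by auto
  show ?thesis
    unfolding fd_ideal_def
    using j len block unital_star_hom_zero
    by (auto simp: fd_zero_fdalg fd_add_fdalg fd_mult_fdalg unital_star_homD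
        left_mult_zero_mat right_mult_zero_mat)
qed

lemma unital_star_hom_unit11_block_nonzero:
  assumes j: "j < length ms" "0 < ms!j"
  obtains i where "i < length ns" "\<phi> (unit11 ns i) ! j \<noteq> 0\<^sub>m (ms!j) (ms!j)"
proof -
  have "\<exists>i<length ns. \<phi> (unit11 ns i) ! j \<noteq> 0\<^sub>m (ms!j) (ms!j)"
  proof (rule ccontr)
    assume "\<not> ?thesis"
    then have "\<phi> (fd_one ns) ! j = 0\<^sub>m (ms!j) (ms!j)"
      using fd_ideal_contains_one[OF unital_star_hom_block_kernel_ideal[OF j(1)]] unit11_fdalg
      by blast
    then have "(1\<^sub>m (ms!j) :: complex mat) $$ (0, 0) = 0"
      using unital_star_homD(6) j by simp
    then show False
      using j(2) by simp
  qed
  then show ?thesis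
    using that by blast
qed

end

context
  fixes ns ms :: "nat list" and \<phi> :: "complex mat list \<Rightarrow> complex mat list" and q :: "complex mat list"
  assumes L: "L_embedding ns ms \<phi>" and q: "fd_min_projection ms q"
begin

lemma L_embedding_unit11_image:
  assumes i: "i < length ns" "0 < ns!i"
  obtains j v where "j < length ms" "v \<in> carrier_vec (ms!j)" "v \<bullet>c v = 1"
    "\<phi> (unit11 ns i) = fd_rank_one ms j v"
proof -
  have hom: "unital_star_hom ns ms \<phi>"
    using L by (simp add: L_embedding_def)
  have unit_min: "fd_min_projection ns (unit11 ns i)"
    using fd_rank_one_min_projection[OF i(1) _ unit_vec_cscalar_prod_self[OF i(2)]]
    by (simp add: unit11_eq_fd_rank_one[OF i(1)])
  have "rho_min ms (\<phi> (unit11 ns i)) = 0"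
    using L rho_min_min_projection[OF unit_min] unit11_fdalg by (simp add: L_embedding_def)
  moreover have "fd_projection ms (\<phi> (unit11 ns i))"
    using unital_star_hom_projection[OF hom] unit_min by (simp add: fd_min_projection_def)
  ultimately have "fd_min_projection ms (\<phi> (unit11 ns i))"
    using fd_projection_rho_min_less_1 q by simp
  then show ?thesis
    using fd_min_projection_rank_one that by metis
qed

lemma L_embedding_unit11_block_unique:
  assumes i: "i < length ns" "i' < length ns" and pos: "0 < ns!i" "0 < ns!i'" and j: "j < length ms"
    and nonzero: "\<phi> (unit11 ns i) ! j \<noteq> 0\<^sub>m (ms!j) (ms!j)" "\<phi> (unit11 ns i') ! j \<noteq> 0\<^sub>m (ms!j) (ms!j)"
  shows "i = i'"
proof (rule ccontr)
  assume ne: "i \<noteq> i'"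
  have hom: "unital_star_hom ns ms \<phi>"
    using L by (simp add: L_embedding_def)
  obtain k v where "k < length ms" and v: "v \<in> carrier_vec (ms!k)" "v \<bullet>c v = 1"
    and img_i: "\<phi> (unit11 ns i) = fd_rank_one ms k v"
    using L_embedding_unit11_image[OF i(1) pos(1)] .
  obtain k' w where "k' < length ms" and w: "w \<in> carrier_vec (ms!k')" "w \<bullet>c w = 1"
    and img_i': "\<phi> (unit11 ns i') = fd_rank_one ms k' w"
    using L_embedding_unit11_image[OF i(2) pos(2)] .
  have "k = j" "k' = j"
    using nonzero img_i img_i' j by (auto simp: fd_rank_one_def)
  have "fd_mult (fd_rank_one ms j v) (fd_rank_one ms j w) = \<phi> (fd_mult (unit11 ns i) (unit11 ns i'))"
    using unital_star_homD(3)[OF hom unit11_fdalg unit11_fdalg] img_i img_i' \<open>k = j\<close> \<open>k' = j\<close>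
    by simp
  also have "\<dots> = fd_zero ms"
    using unit11_mult_unit11[OF ne] unital_star_hom_zero[OF hom] by simp
  finally have product: "fd_mult (fd_rank_one ms j v) (fd_rank_one ms j w) = fd_zero ms" .
  have "outer_prod v v * outer_prod w w = 0\<^sub>m (ms!j) (ms!j)"
    using arg_cong[OF product, of "\<lambda>x. x!j"] j by (simp add: fd_rank_one_def)
  then have "v \<bullet>c w = 0"
    using outer_prod_mult_eq_0_imp_orthogonal[OF v(2) w(2)] v w \<open>k = j\<close> \<open>k' = j\<close> by simp
  then have "rho_sim ms (\<phi> (unit11 ns i)) (\<phi> (unit11 ns i')) = 0"
    using rho_sim_orthonormal_rank_one[OF j] v w img_i img_i' \<open>k = j\<close> \<open>k' = j\<close> by simp
  moreover have "rho_sim ms (\<phi> (unit11 ns i)) (\<phi> (unit11 ns i')) = rho_sim ns (unit11 ns i) (unit11 ns i')"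
    using L unit11_fdalg by (simp add: L_embedding_def)
  moreover have "1/2 \<le> rho_sim ns (unit11 ns i) (unit11 ns i')"
    using rho_sim_unit11_distinct[OF i ne pos(1)] .
  ultimately show False
    by simp
qed

lemma L_embedding_E_mult:
  assumes i: "i < length ns" "0 < ns!i" and j: "j < length ms"
  shows "E_mult ns ms \<phi> i j = (if \<phi> (unit11 ns i) ! j = 0\<^sub>m (ms!j) (ms!j) then 0 else 1)"
proof -
  obtain k v where "k < length ms" and v: "v \<in> carrier_vec (ms!k)" "v \<bullet>c v = 1"
    and img: "\<phi> (unit11 ns i) = fd_rank_one ms k v"
    using L_embedding_unit11_image[OF i] .
  show ?thesis
    using img j v outer_prod_self_nonzero[OF v(2)]
    by (auto simp: E_mult_def fd_rank_one_def cmat_rank_outer_prod cmat_rank_zero)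
qed

lemma L_embedding_E_mult_eq_delta:
  assumes pos: "\<forall>n\<in>set ns. 0 < n" and j: "j < length ms"
    and i1: "i1 < length ns" "\<phi> (unit11 ns i1) ! j \<noteq> 0\<^sub>m (ms!j) (ms!j)"
    and i: "i < length ns"
  shows "E_mult ns ms \<phi> i j = (if i = i1 then 1 else 0)"
proof -
  have pos_i: "0 < ns!i" "0 < ns!i1"
    using pos i i1(1) by simp_all
  show ?thesis
  proof (cases "i = i1")
    case True
    then show ?thesis
      using L_embedding_E_mult[OF i pos_i(1) j] i1(2) by simp
  next
    case False
    then have "\<phi> (unit11 ns i) ! j = 0\<^sub>m (ms!j) (ms!j)"
      using L_embedding_unit11_block_unique[OF i i1(1) pos_i j _ i1(2)] by blast
    then show ?thesis
      using L_embedding_E_mult[OF i pos_i(1) j] False by simp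
  qed
qed

end

theorem lemma3p3:
  fixes ns ms :: "nat list" and \<phi> :: "complex mat list \<Rightarrow> complex mat list"
  assumes "\<forall>n\<in>set ns. 0 < n"
    and "\<forall>m\<in>set ms. 0 < m"
    and "L_embedding ns ms \<phi>"
  shows "\<forall>j<length ms. mult_at ns ms \<phi> j = 1"
proof (intro allI impI)
  fix j assume j: "j < length ms"
  have pos: "0 < ms!j"
    using assms(2) j by simp
  have hom: "unital_star_hom ns ms \<phi>"
    using assms(3) by (simp add: L_embedding_def)
  have q: "fd_min_projection ms (fd_rank_one ms j (unit_vec (ms!j) 0))"
    using fd_rank_one_min_projection[OF j _ unit_vec_cscalar_prod_self[OF pos]] by simp
  obtain i1 where i1: "i1 < length ns" "\<phi> (unit11 ns i1) ! j \<noteq> 0\<^sub>m (ms!j) (ms!j)"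
    using unital_star_hom_unit11_block_nonzero[OF hom j pos] .
  have "E_mult ns ms \<phi> i j = (if i = i1 then 1 else 0)" if "i < length ns" for i
    using L_embedding_E_mult_eq_delta[OF assms(3) q assms(1) j i1 that] .
  then show "mult_at ns ms \<phi> j = 1"
    unfolding mult_at_def using i1(1) by simp
qed

end
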